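(* There exists $m_1>0$ with the following property. Let $f$ be a solution of $\frac{f''}{1+(f')^2}=\left(\frac r2-\frac{n-1}{r}\right)f'-\frac f2$ with $f(\sqrt{2(n-1)})>0$, and suppose $f'(r)>0$ and $f''(r)<0$ for all $r<\sqrt{2(n-1)}$ in its domain. Then $f(r)<0$ whenever $r<m_1$ and $f(r)$ is defined.
   Context: $n\ge2$ is a fixed integer; $f$ is a real function of $r>0$ defined on an interval containing $\sqrt{2(n-1)}$. *)

theory Defs
  imports "HOL-Analysis.Analysis"
begin

definition solves_ode :: "nat \<Rightarrow> real set \<Rightarrow> (real \<Rightarrow> real) \<Rightarrow> (real \<Rightarrow> real) \<Rightarrow> (real \<Rightarrow> real) \<Rightarrow> bool" where
  "solves_ode n I f f1 f2 \<longleftrightarrow>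
     (\<forall>r\<in>I. (f has_real_derivative f1 r) (at r) \<and> (f1 has_real_derivative f2 r) (at r) \<and>
        f2 r / (1 + (f1 r)\<^sup>2) = (r / 2 - (real n - 1) / r) * f1 r - f r / 2)"

end

theory Submission
  imports Defs
begin

text \<open>Multiplying the equation by the weight \<open>w(r) = r^(n-1) e^(-r\<^sup>2/4)\<close> puts it in
  divergence form: the flux \<open>S = w f'/\<surd>(1 + f'\<^sup>2)\<close> satisfies \<open>S' = - w f / (2 \<surd>(1 + f'\<^sup>2))\<close>.
  Suppose \<open>f(a) \<ge> 0\<close> for some small \<open>a > 0\<close>. Since \<open>f' > 0\<close> before \<open>c = \<surd>(2(n-1))\<close>, \<open>f\<close> is
  nonnegative and increasing on \<open>[a, c)\<close>, so \<open>S\<close> decreases there and \<open>S(a) \<le> w(a) \<le> a\<close> is small.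
  On \<open>[c/2, 3c/4]\<close> the weight is bounded below, which forces \<open>f'\<close> to be small and
  \<open>S' \<le> - w f(c/2)/4\<close>; positivity of \<open>S(3c/4)\<close> then gives \<open>f(c/2) \<le> C S(a)\<close>. Consequently \<open>S\<close>
  stays above \<open>S(a)/2\<close> on a fixed interval \<open>[a, \<rho>]\<close>, so \<open>f' \<ge> S(a)/(2r)\<close> there and \<open>f\<close> gains
  at least \<open>S(a)/2 \<cdot> ln(\<rho>/a)\<close>, which exceeds \<open>f(c/2)\<close> once \<open>a < \<rho> e^(-2C)\<close>.\<close>

definition weight :: "nat \<Rightarrow> real \<Rightarrow> real" where
  "weight n x = x ^ (n - 1) * exp (- (x\<^sup>2) / 4)"

definition slope_sine :: "real \<Rightarrow> real" where
  "slope_sine t = t / sqrt (1 + t\<^sup>2)"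

definition flux :: "nat \<Rightarrow> (real \<Rightarrow> real) \<Rightarrow> real \<Rightarrow> real" where
  "flux n g x = weight n x * slope_sine (g x)"

lemma one_plus_square_pos [simp]: "0 < 1 + (t::real)\<^sup>2"
  by (simp add: add_pos_nonneg)

lemma one_plus_square_neq_zero [simp]: "1 + (t::real)\<^sup>2 \<noteq> 0"
  using one_plus_square_pos[of t] by linarith

lemma slope_sine_pos_iff [simp]: "0 < slope_sine t \<longleftrightarrow> 0 < t"
  by (simp add: slope_sine_def pos_less_divide_eq)

lemma slope_sine_le_1: "slope_sine t \<le> 1"
proof -
  have "t \<le> sqrt (1 + t\<^sup>2)"
    using real_sqrt_le_mono[of "t\<^sup>2" "1 + t\<^sup>2"] by (simp add: real_le_rsqrt)
  then show ?thesis by (simp add: slope_sine_def)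
qed

lemma slope_sine_le_self:
  assumes "0 \<le> t"
  shows "slope_sine t \<le> t"
proof -
  have "t * 1 \<le> t * sqrt (1 + t\<^sup>2)"
    using assms by (intro mult_left_mono) auto
  then show ?thesis by (simp add: slope_sine_def divide_le_eq)
qed

lemma sqrt_one_plus_square_lt_2:
  assumes "0 \<le> t" and "slope_sine t < 1/2"
  shows "sqrt (1 + t\<^sup>2) < 2"
proof -
  have "2 * t < sqrt (1 + t\<^sup>2)"
    using assms(2) by (simp add: slope_sine_def field_simps)
  then have "(2 * t)\<^sup>2 < (sqrt (1 + t\<^sup>2))\<^sup>2"
    using assms(1) by (intro power_strict_mono) auto
  then have "1 + t\<^sup>2 < 2\<^sup>2" by simp
  then show ?thesis by (rule real_less_lsqrt[rotated]) simp
qed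

lemma slope_sine_has_real_derivative:
  "(slope_sine has_real_derivative 1 / sqrt (1 + t\<^sup>2) ^ 3) (at t)"
proof -
  define q where "q = sqrt (1 + t\<^sup>2)"
  have q_pos: "0 < q" and q_sq: "q * q = 1 + t\<^sup>2"
    by (simp_all add: q_def)
  have "((\<lambda>t. sqrt (1 + t\<^sup>2)) has_real_derivative inverse q / 2 * (2 * t)) (at t)"
    unfolding q_def by (intro DERIV_chain2[OF DERIV_real_sqrt] derivative_eq_intros refl) auto
  then have "((\<lambda>t. t / sqrt (1 + t\<^sup>2)) has_real_derivative
      (1 * q - t * (inverse q / 2 * (2 * t))) / (q * q)) (at t)"
    using q_pos unfolding q_def by (intro DERIV_divide DERIV_ident) auto
  moreover have "(1 * q - t * (inverse q / 2 * (2 * t))) / (q * q) = 1 / q ^ 3"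
    using q_pos q_sq by (simp add: field_simps power2_eq_square power3_eq_cube)
  ultimately show ?thesis by (simp add: slope_sine_def[abs_def] q_def)
qed

lemma weight_pos: "0 < x \<Longrightarrow> 0 < weight n x"
  by (simp add: weight_def)

lemma weight_le_self:
  assumes "2 \<le> n" and "0 < x" and "x \<le> 1"
  shows "weight n x \<le> x"
proof -
  have "weight n x \<le> x ^ (n - 1)"
    using assms(2) by (simp add: weight_def mult_left_le_one_le)
  also have "\<dots> \<le> x ^ 1"
    using assms by (intro power_decreasing) auto
  finally show ?thesis by simp
qed

definition weight_floor :: "nat \<Rightarrow> real \<Rightarrow> real" where
  "weight_floor n c = (c / 2) ^ (n - 1) * exp (- (c\<^sup>2) / 4)"

lemma weight_floor_pos: "0 < c \<Longrightarrow> 0 < weight_floor n c"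
  by (simp add: weight_floor_def)

lemma weight_floor_le_weight:
  assumes "0 < c" and "c / 2 \<le> x" and "x \<le> c"
  shows "weight_floor n c \<le> weight n x"
  unfolding weight_floor_def weight_def
  using assms by (intro mult_mono power_mono) auto

lemma weight_has_real_derivative:
  assumes "1 \<le> n" and "0 < x"
  shows "(weight n has_real_derivative weight n x * ((real n - 1) / x - x / 2)) (at x)"
proof -
  have "real (n - 1) * x ^ (n - 1 - 1) = x ^ (n - 1) * ((real n - 1) / x)"
  proof (cases "n = 1")
    case False
    then obtain k where "n = k + 2"
      using assms(1) by (intro that[of "n - 2"]) simp
    then show ?thesis using assms(2) by (simp add: field_simps)
  qed simp
  then show ?thesis
    unfolding weight_def[abs_def]
    by (auto intro!: derivative_eq_intros simp: algebra_simps)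
qed

lemma flux_has_real_derivative:
  assumes "1 \<le> n" and "0 < s"
    and "(g has_real_derivative g') (at s)"
    and ode: "g' / (1 + (g s)\<^sup>2) = (s / 2 - (real n - 1) / s) * g s - f s / 2"
  shows "(flux n g has_real_derivative - (weight n s * f s / (2 * sqrt (1 + (g s)\<^sup>2)))) (at s)"
proof -
  define q where "q = sqrt (1 + (g s)\<^sup>2)"
  define k where "k = (real n - 1) / s - s / 2"
  have q_pos: "0 < q" and q_sq: "q\<^sup>2 = 1 + (g s)\<^sup>2"
    by (simp_all add: q_def)
  have "g' = (1 + (g s)\<^sup>2) * (g' / (1 + (g s)\<^sup>2))"
    by simp
  also have "\<dots> = q\<^sup>2 * (- k * g s - f s / 2)"
    unfolding ode q_sq k_def by (simp add: algebra_simps)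
  finally have g': "g' = q\<^sup>2 * (- k * g s - f s / 2)" .
  have "(flux n g has_real_derivative
          weight n s * k * slope_sine (g s) + 1 / q ^ 3 * g' * weight n s) (at s)"
    unfolding flux_def[abs_def] k_def q_def
    by (intro DERIV_mult DERIV_chain2[OF slope_sine_has_real_derivative]
        weight_has_real_derivative assms)
  moreover have "weight n s * k * slope_sine (g s) + 1 / q ^ 3 * g' * weight n s
      = - (weight n s * f s / (2 * q))"
    using q_pos unfolding g' slope_sine_def q_def[symmetric]
    by (simp add: field_simps power2_eq_square power3_eq_cube)
  ultimately show ?thesis by (simp add: q_def)
qed

lemma increment_le_increment_of_derivative_le:
  fixes F G :: "real \<Rightarrow> real"
  assumes "a \<le> b"
    and "\<And>x. a \<le> x \<Longrightarrow> x \<le> b \<Longrightarrow> (F has_real_derivative F' x) (at x)"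
    and "\<And>x. a \<le> x \<Longrightarrow> x \<le> b \<Longrightarrow> (G has_real_derivative G' x) (at x)"
    and "\<And>x. a \<le> x \<Longrightarrow> x \<le> b \<Longrightarrow> G' x \<le> F' x"
  shows "G b - G a \<le> F b - F a"
proof -
  have "(\<lambda>x. F x - G x) a \<le> (\<lambda>x. F x - G x) b"
  proof (rule DERIV_nonneg_imp_nondecreasing[OF assms(1)])
    fix x assume "a \<le> x" "x \<le> b"
    then show "\<exists>y. ((\<lambda>x. F x - G x) has_real_derivative y) (at x) \<and> 0 \<le> y"
      using assms(2-4) by (intro exI[of _ "F' x - G' x"]) (auto intro: DERIV_diff)
  qed
  then show ?thesis by simp
qed

locale nonneg_ode_branch =
  fixes n :: nat and a c :: real and f g g' :: "real \<Rightarrow> real"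
  assumes n_ge_2: "2 \<le> n"
    and a_pos: "0 < a" and a_less_c: "a < c"
    and ode: "solves_ode n {a..c} f g g'"
    and slope_pos: "\<And>s. a \<le> s \<Longrightarrow> s < c \<Longrightarrow> 0 < g s"
    and start_nonneg: "0 \<le> f a"
begin

lemma f_has_real_derivative: "a \<le> s \<Longrightarrow> s \<le> c \<Longrightarrow> (f has_real_derivative g s) (at s)"
  using ode by (simp add: solves_ode_def)

lemma flux_has_real_derivative_on_branch:
  assumes "a \<le> s" and "s \<le> c"
  shows "(flux n g has_real_derivative - (weight n s * f s / (2 * sqrt (1 + (g s)\<^sup>2)))) (at s)"
  using ode assms a_pos n_ge_2 by (intro flux_has_real_derivative) (auto simp: solves_ode_def)

lemma f_mono:
  assumes "a \<le> x" and "x \<le> y" and "y < c"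
  shows "f x \<le> f y"
proof (rule DERIV_nonneg_imp_nondecreasing[OF assms(2)])
  fix t assume "x \<le> t" "t \<le> y"
  then have "a \<le> t" "t < c" using assms by auto
  then show "\<exists>d. (f has_real_derivative d) (at t) \<and> 0 \<le> d"
    using f_has_real_derivative slope_pos by (intro exI[of _ "g t"]) (auto intro: less_imp_le)
qed

lemma f_nonneg: "a \<le> s \<Longrightarrow> s < c \<Longrightarrow> 0 \<le> f s"
  using f_mono[of a s] start_nonneg by simp

lemma flux_pos: "a \<le> s \<Longrightarrow> s < c \<Longrightarrow> 0 < flux n g s"
  using a_pos slope_pos by (simp add: flux_def weight_pos)

lemma flux_antimono:
  assumes "a \<le> x" and "x \<le> y" and "y < c"
  shows "flux n g y \<le> flux n g x"
proof (rule DERIV_nonpos_imp_nonincreasing[OF assms(2)])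
  fix t assume "x \<le> t" "t \<le> y"
  then have "a \<le> t" "t < c" using assms by auto
  then show "\<exists>d. (flux n g has_real_derivative d) (at t) \<and> d \<le> 0"
    using flux_has_real_derivative_on_branch f_nonneg weight_pos[of t n] a_pos
    by (intro exI[of _ "- (weight n t * f t / (2 * sqrt (1 + (g t)\<^sup>2)))"]) auto
qed

lemma c_pos: "0 < c"
  using a_pos a_less_c by simp

lemma flux_decay_rate_ge:
  assumes "a \<le> c / 2" and small_flux: "flux n g a < weight_floor n c / 2"
    and "c / 2 \<le> s" and "s \<le> 3 * c / 4"
  shows "weight_floor n c * f (c / 2) / 4 \<le> weight n s * f s / (2 * sqrt (1 + (g s)\<^sup>2))"
proof -
  have s: "a \<le> s" "s < c" "0 < s" using assms c_pos by auto
  have floor_le: "weight_floor n c \<le> weight n s"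
    using assms c_pos by (intro weight_floor_le_weight) auto
  have sine_pos: "0 < slope_sine (g s)" using slope_pos s by simp
  have "weight_floor n c * slope_sine (g s) \<le> flux n g s"
    unfolding flux_def using floor_le sine_pos by simp
  also have "\<dots> \<le> flux n g a" using flux_antimono s by simp
  also have "\<dots> < weight_floor n c * (1 / 2)" using small_flux by simp
  finally have "slope_sine (g s) < 1 / 2"
    using weight_floor_pos[OF c_pos, of n] by simp
  then have q_lt_2: "sqrt (1 + (g s)\<^sup>2) < 2"
    using slope_pos s by (intro sqrt_one_plus_square_lt_2) (auto intro: less_imp_le)
  have "weight_floor n c * f (c / 2) \<le> weight n s * f s"
    using floor_le f_mono[of "c / 2" s] f_nonneg[of "c / 2"] weight_floor_pos[OF c_pos, of n] assms s
    by (intro mult_mono) auto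
  also have "weight n s * f s / 4 \<le> weight n s * f s / (2 * sqrt (1 + (g s)\<^sup>2))"
    using q_lt_2 weight_pos[OF s(3), of n] f_nonneg s by (intro divide_left_mono) auto
  finally show ?thesis by simp
qed

lemma f_at_half_bound:
  assumes "a \<le> c / 2" and small_flux: "flux n g a < weight_floor n c / 2"
  shows "c * weight_floor n c * f (c / 2) < 16 * flux n g a"
proof -
  define L where "L = weight_floor n c * f (c / 2) / 4"
  have "flux n g (3 * c / 4) - flux n g (c / 2) \<le> - L * (3 * c / 4) - - L * (c / 2)"
  proof (rule increment_le_increment_of_derivative_le[where F' = "\<lambda>_. - L"])
    fix x assume x: "c / 2 \<le> x" "x \<le> 3 * c / 4"
    show "((\<lambda>x. - L * x) has_real_derivative - L) (at x)"
      by (auto intro!: derivative_eq_intros)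
    show "(flux n g has_real_derivative
        - (weight n x * f x / (2 * sqrt (1 + (g x)\<^sup>2)))) (at x)"
      using x assms c_pos by (intro flux_has_real_derivative_on_branch) auto
    show "- (weight n x * f x / (2 * sqrt (1 + (g x)\<^sup>2))) \<le> - L"
      unfolding L_def using flux_decay_rate_ge[OF assms x] by simp
  qed (use c_pos in simp)
  moreover have "0 < flux n g (3 * c / 4)"
    using assms c_pos by (intro flux_pos) auto
  moreover have "flux n g (c / 2) \<le> flux n g a"
    using assms c_pos by (intro flux_antimono) auto
  ultimately have "L * (c / 4) < flux n g a"
    by (simp add: algebra_simps)
  then show ?thesis unfolding L_def by (simp add: mult_ac)
qed

lemma flux_ge_half_start:
  assumes "\<rho> \<le> 1" and "\<rho> \<le> c / 2" and small_f: "\<rho> * f (c / 2) \<le> flux n g a"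
    and "a \<le> s" and "s \<le> \<rho>"
  shows "flux n g a / 2 \<le> flux n g s"
proof -
  define K where "K = f (c / 2) / 2"
  have K_nonneg: "0 \<le> K"
    unfolding K_def using assms c_pos by (intro divide_nonneg_pos f_nonneg) auto
  have "- K * s - - K * a \<le> flux n g s - flux n g a"
  proof (rule increment_le_increment_of_derivative_le[where G' = "\<lambda>_. - K"])
    fix x assume x: "a \<le> x" "x \<le> s"
    then have x_pos: "0 < x" and x_le: "x \<le> 1" "x < c" "x \<le> c / 2"
      using a_pos assms c_pos by auto
    show "((\<lambda>x. - K * x) has_real_derivative - K) (at x)"
      by (auto intro!: derivative_eq_intros)
    show "(flux n g has_real_derivative
        - (weight n x * f x / (2 * sqrt (1 + (g x)\<^sup>2)))) (at x)"
      using x x_le by (intro flux_has_real_derivative_on_branch) auto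
    have f_x: "0 \<le> f x" "f x \<le> f (c / 2)"
      using x x_le c_pos by (auto intro: f_nonneg f_mono)
    have weight_x: "0 \<le> weight n x" "weight n x \<le> 1"
      using weight_pos[OF x_pos, of n] weight_le_self[OF n_ge_2 x_pos x_le(1)] x_le by auto
    have "weight n x * f x / (2 * sqrt (1 + (g x)\<^sup>2)) \<le> weight n x * f x / 2"
      using f_x weight_x by (intro divide_left_mono) auto
    also have "\<dots> \<le> K"
      unfolding K_def using f_x weight_x
      by (intro divide_right_mono order_trans[OF mult_left_le_one_le]) auto
    finally show "- K \<le> - (weight n x * f x / (2 * sqrt (1 + (g x)\<^sup>2)))" by simp
  qed (use assms in simp)
  moreover have "K * (s - a) \<le> K * \<rho>"
    using K_nonneg assms a_pos by (intro mult_left_mono) auto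
  ultimately show ?thesis
    using small_f unfolding K_def by (simp add: algebra_simps)
qed

lemma slope_ge_start:
  assumes "\<rho> \<le> 1" and "\<rho> \<le> c / 2" and "\<rho> * f (c / 2) \<le> flux n g a"
    and "a \<le> s" and "s \<le> \<rho>"
  shows "flux n g a / (2 * s) \<le> g s"
proof -
  have s: "0 < s" "s \<le> 1" "s < c" using assms a_pos c_pos by auto
  have "flux n g a / 2 \<le> weight n s * slope_sine (g s)"
    using flux_ge_half_start[OF assms] by (simp add: flux_def)
  also have "\<dots> \<le> s * g s"
  proof (rule mult_mono)
    have "0 < g s" using slope_pos assms s by simp
    then show "slope_sine (g s) \<le> g s" "0 \<le> slope_sine (g s)"
      by (simp_all add: slope_sine_le_self less_imp_le)
  qed (use weight_le_self[OF n_ge_2 s(1,2)] s in auto)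
  finally show ?thesis using s by (simp add: divide_le_eq mult_ac)
qed

lemma f_log_growth:
  assumes "a \<le> \<rho>" and "\<rho> \<le> 1" and "\<rho> \<le> c / 2" and "\<rho> * f (c / 2) \<le> flux n g a"
  shows "flux n g a / 2 * (ln \<rho> - ln a) \<le> f \<rho> - f a"
proof -
  have "flux n g a / 2 * ln \<rho> - flux n g a / 2 * ln a \<le> f \<rho> - f a"
  proof (rule increment_le_increment_of_derivative_le[OF assms(1)])
    fix x assume x: "a \<le> x" "x \<le> \<rho>"
    then show "((\<lambda>x. flux n g a / 2 * ln x) has_real_derivative flux n g a / 2 * (1 / x)) (at x)"
      using a_pos by (intro DERIV_cmult DERIV_ln_divide) simp
    show "(f has_real_derivative g x) (at x)"
      using x assms c_pos by (intro f_has_real_derivative) auto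
    show "flux n g a / 2 * (1 / x) \<le> g x"
      using slope_ge_start[OF assms(2-4) x] by simp
  qed
  then show ?thesis by (simp add: right_diff_distrib)
qed

lemma start_ge_radius:
  assumes "0 < \<rho>" and "\<rho> \<le> 1" and "\<rho> \<le> c / 2" and "16 * \<rho> \<le> c * weight_floor n c"
  shows "min (\<rho> * exp (- 32 / (c * weight_floor n c))) (weight_floor n c / 2) \<le> a"
proof (rule ccontr)
  define w0 where "w0 = weight_floor n c"
  define A where "A = flux n g a"
  define C where "C = 16 / (c * w0)"
  have w0_pos: "0 < w0" unfolding w0_def by (rule weight_floor_pos[OF c_pos])
  assume "\<not> ?thesis"
  then have a_small: "a < \<rho> * exp (- 2 * C)" "a < w0 / 2"
    unfolding C_def w0_def by auto
  have "\<rho> * exp (- 2 * C) \<le> \<rho>"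
    using assms(1) w0_pos c_pos by (simp add: C_def)
  then have a_le: "a \<le> \<rho>" "a \<le> 1" "a \<le> c / 2"
    using a_small(1) assms(2,3) by linarith+
  have A_pos: "0 < A" unfolding A_def using a_less_c by (intro flux_pos) auto
  have "A \<le> a"
    unfolding A_def flux_def
    using weight_le_self[OF n_ge_2 a_pos a_le(2)] slope_sine_le_1 weight_pos[OF a_pos, of n]
    by (intro order_trans[OF mult_left_le]) auto
  then have f_half: "f (c / 2) < C * A"
    using f_at_half_bound[OF a_le(3)] a_small c_pos w0_pos
    unfolding A_def C_def w0_def by (simp add: field_simps)
  have "\<rho> * C \<le> 1" using assms(4) c_pos w0_pos by (simp add: C_def w0_def field_simps)
  have "\<rho> * f (c / 2) \<le> \<rho> * (C * A)"
    using f_half assms(1) by simp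
  also have "\<dots> \<le> A"
    using \<open>\<rho> * C \<le> 1\<close> A_pos by (simp add: mult.assoc[symmetric] mult_left_le_one_le)
  finally have "\<rho> * f (c / 2) \<le> A" .
  then have "A / 2 * (ln \<rho> - ln a) \<le> f \<rho> - f a"
    unfolding A_def using f_log_growth a_le assms by simp
  also have "\<dots> < C * A"
    using f_half f_mono[of \<rho> "c / 2"] start_nonneg a_le assms c_pos by simp
  finally have "A / 2 * (ln \<rho> - ln a) < A / 2 * (2 * C)" by (simp add: mult_ac)
  moreover have "ln a < ln \<rho> - 2 * C"
    using ln_less_cancel_iff[of a "\<rho> * exp (- 2 * C)"] a_small a_pos assms(1)
    by (simp add: ln_mult)
  ultimately show False using A_pos by (simp add: mult_less_cancel_left_pos)
qed

end

lemma solves_ode_subset: "solves_ode n I f f1 f2 \<Longrightarrow> J \<subseteq> I \<Longrightarrow> solves_ode n J f f1 f2"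
  by (auto simp: solves_ode_def)

theorem lemma2p6:
  fixes n :: nat
  assumes "n \<ge> 2"
  shows "\<exists>m1>0. \<forall>(I::real set) f f1 f2.
           is_interval I \<and> open I \<and> I \<subseteq> {0<..} \<and> sqrt (2 * (real n - 1)) \<in> I \<and>
           solves_ode n I f f1 f2 \<and>
           f (sqrt (2 * (real n - 1))) > 0 \<and>
           (\<forall>r\<in>I. r < sqrt (2 * (real n - 1)) \<longrightarrow> f1 r > 0 \<and> f2 r < 0)
           \<longrightarrow> (\<forall>r\<in>I. r < m1 \<longrightarrow> f r < 0)"
proof -
  define c where "c = sqrt (2 * (real n - 1))"
  define w0 where "w0 = weight_floor n c"
  define \<rho> where "\<rho> = min 1 (min (c / 2) (c * w0 / 16))"
  define m1 where "m1 = min (\<rho> * exp (- 32 / (c * w0))) (w0 / 2)"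
  have c_pos: "0 < c" using assms by (simp add: c_def)
  have w0_pos: "0 < w0" unfolding w0_def by (rule weight_floor_pos[OF c_pos])
  have \<rho>: "0 < \<rho>" "\<rho> \<le> 1" "\<rho> \<le> c / 2" "16 * \<rho> \<le> c * w0"
    using c_pos w0_pos by (auto simp: \<rho>_def)
  have "\<rho> * exp (- 32 / (c * w0)) \<le> \<rho>"
    using \<rho>(1) c_pos w0_pos by simp
  then have "m1 \<le> c / 2"
    using \<rho>(3) unfolding m1_def by linarith
  have negative: "f r < 0"
    if I: "is_interval I" "I \<subseteq> {0<..}" "c \<in> I" and ode: "solves_ode n I f f1 f2"
      and slope: "\<forall>s\<in>I. s < c \<longrightarrow> 0 < f1 s \<and> f2 s < 0" and r: "r \<in> I" "r < m1"
    for I f f1 f2 r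
  proof (rule ccontr)
    assume "\<not> f r < 0"
    have r_less_c: "r < c" using r(2) \<open>m1 \<le> c / 2\<close> c_pos by simp
    have sub: "{r..c} \<subseteq> I" using mem_is_interval_1_I[OF I(1) r(1) I(3)] by auto
    interpret nonneg_ode_branch n r c f f1 f2
      using assms I r r_less_c sub slope \<open>\<not> f r < 0\<close>
      by unfold_locales (auto intro: solves_ode_subset[OF ode] simp: subset_iff)
    have "m1 \<le> r" unfolding m1_def w0_def using start_ge_radius[OF \<rho>[unfolded w0_def]] .
    then show False using r(2) by simp
  qed
  show ?thesis
    unfolding c_def[symmetric]
  proof (intro exI[of _ m1] conjI allI impI ballI)
    show "0 < m1" using \<rho> w0_pos by (simp add: m1_def)
    fix I f f1 f2 r
    assume "is_interval I \<and> open I \<and> I \<subseteq> {0<..} \<and> c \<in> I \<and> solves_ode n I f f1 f2 \<and>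
      0 < f c \<and> (\<forall>r\<in>I. r < c \<longrightarrow> 0 < f1 r \<and> f2 r < 0)" and "r \<in> I" and "r < m1"
    then show "f r < 0" by (intro negative[of I]) auto
  qed
qed

end
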